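(* Let $n \ge 2$, let $K, L$ be compact convex subsets of $\mathbb{R}^n$, and let $d \in \{1, \dots, n-1\}$. Suppose that for every $(n-d)$-dimensional linear subspace $\xi \subseteq \mathbb{R}^n$, the projection $L_\xi$ contains a translate of $K_\xi$. Then there exists $x \in \mathbb{R}^n$ such that $$K + x \subseteq \tfrac{n}{n-d} L.$$
   Context: For a set $S\subseteq\mathbb{R}^n$ and a linear subspace $\xi$, $S_\xi$ denotes the orthogonal projection of $S$ onto $\xi$. "$A$ contains a translate of $B$" means $B + w \subseteq A$ for some vector $w$. *)

theory Defs
  imports "HOL-Analysis.Analysis"
begin

definition orth_proj :: "'a::euclidean_space set \<Rightarrow> 'a \<Rightarrow> 'a" where
  "orth_proj xi x = (THE p. p \<in> xi \<and> (\<forall>y\<in>xi. (x - p) \<bullet> y = 0))"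

definition proj_set :: "'a::euclidean_space set \<Rightarrow> 'a set \<Rightarrow> 'a set" where
  "proj_set xi S = orth_proj xi ` S"

end

theory Submission
  imports Defs
begin

text \<open>
  Let \<open>n = DIM('a)\<close>, \<open>m = n - d\<close> and \<open>\<lambda> = n / m\<close>, and write \<open>h\<^sub>K, h\<^sub>L\<close> for the
  support functions of \<open>K\<close> and \<open>L\<close>.  The proof works entirely with these sublinear functions.

  (1) If a translate of the projection of \<open>K\<close> onto an \<open>m\<close>-dimensional subspace \<open>\<xi>\<close> lies in the
      projection of \<open>L\<close>, then \<open>h\<^sub>K u + w \<bullet> u \<le> h\<^sub>L u\<close> for all \<open>u \<in> \<xi>\<close>.  Since \<open>m + 1\<close> vectors
      with sum zero span a space of dimension at most \<open>m\<close>, every such family \<open>a\<close> satisfies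
      \<open>\<Sum> h\<^sub>K(a\<^sub>i) \<le> \<Sum> h\<^sub>L(a\<^sub>i)\<close>.
  (2) A symmetrisation argument (induction on the size \<open>N\<close> of the family, perturbing it to
      \<open>a\<^sub>i + a\<^sub>j/N\<close>) upgrades this to \<open>m \<Sum> h\<^sub>K(a\<^sub>i) \<le> (N - 1) \<Sum> h\<^sub>L(a\<^sub>i)\<close>; so families of at most
      \<open>n + 1\<close> vectors satisfy \<open>\<Sum> g(a\<^sub>i) \<le> 0\<close> for \<open>g = h\<^sub>K - \<lambda> h\<^sub>L\<close>.
  (3) A Caratheodory-type splitting extends \<open>\<Sum> g(a\<^sub>i) \<le> 0\<close> to all finite zero-sum families,
      and a separating hyperplane for the convex hull of the graph of \<open>g\<close> then yields a
      linear functional with \<open>g u \<le> z \<bullet> u\<close>, i.e. \<open>h\<^sub>K u - z \<bullet> u \<le> \<lambda> h\<^sub>L u\<close>.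
  (4) Since compact convex sets are determined by their support functions, \<open>K - z \<subseteq> \<lambda> L\<close>.
\<close>

section \<open>Sublinear functions\<close>

text \<open>Positive homogeneity and subadditivity, the two properties of support functions that the
  combinatorial part of the argument uses.\<close>

definition pos_homogeneous :: "('a::real_vector \<Rightarrow> real) \<Rightarrow> bool" where
  "pos_homogeneous h \<longleftrightarrow> (\<forall>c u. 0 \<le> c \<longrightarrow> h (c *\<^sub>R u) = c * h u)"

definition sublinear :: "('a::real_vector \<Rightarrow> real) \<Rightarrow> bool" where
  "sublinear h \<longleftrightarrow> pos_homogeneous h \<and> (\<forall>u v. h (u + v) \<le> h u + h v)"

lemma pos_homogeneous_zero: "pos_homogeneous h \<Longrightarrow> h 0 = 0"
  unfolding pos_homogeneous_def by (metis mult_zero_left order_refl scaleR_zero_left)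

lemma sublinear_sum:
  assumes "sublinear h" "finite S"
  shows "h (\<Sum>i\<in>S. f i) \<le> (\<Sum>i\<in>S. h (f i))"
  using assms(2)
proof (induction S rule: finite_induct)
  case empty
  then show ?case using assms(1) by (simp add: sublinear_def pos_homogeneous_zero)
next
  case (insert x F)
  have "h (f x + sum f F) \<le> h (f x) + h (sum f F)" using assms(1) by (simp add: sublinear_def)
  then show ?case using insert by simp
qed

lemma sublinear_zero_sum_nonneg:
  assumes "sublinear h" "finite S" "(\<Sum>i\<in>S. a i) = 0"
  shows "0 \<le> (\<Sum>i\<in>S. h (a i))"
  using sublinear_sum[OF assms(1,2), of a] assms(1,3)
  by (simp add: sublinear_def pos_homogeneous_zero)

section \<open>Support functions\<close>

definition support_fun :: "'a::real_inner set \<Rightarrow> 'a \<Rightarrow> real" where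
  "support_fun A u = (SUP a\<in>A. a \<bullet> u)"

lemma support_fun_upper:
  assumes "compact A" "a \<in> A"
  shows "a \<bullet> u \<le> support_fun A u"
proof -
  have "compact ((\<lambda>a. a \<bullet> u) ` A)"
    by (intro compact_continuous_image assms continuous_intros)
  then have "bdd_above ((\<lambda>a. a \<bullet> u) ` A)"
    by (intro bounded_imp_bdd_above compact_imp_bounded)
  then show ?thesis unfolding support_fun_def using assms(2) by (rule cSUP_upper2) simp
qed

lemma support_fun_attained:
  assumes "compact A" "A \<noteq> {}"
  obtains a where "a \<in> A" "support_fun A u = a \<bullet> u"
proof -
  have "compact ((\<lambda>a. a \<bullet> u) ` A)"
    by (intro compact_continuous_image assms continuous_intros)
  then obtain a where a: "a \<in> A" "\<And>b. b \<in> A \<Longrightarrow> b \<bullet> u \<le> a \<bullet> u"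
    using compact_attains_sup[of "(\<lambda>a. a \<bullet> u) ` A"] assms(2) by auto
  have "support_fun A u \<le> a \<bullet> u"
    unfolding support_fun_def using assms(2) a(2) by (rule cSUP_least)
  then have "support_fun A u = a \<bullet> u" using support_fun_upper[OF assms(1) a(1), of u] by linarith
  then show ?thesis using that a(1) by blast
qed

lemma sublinear_support_fun:
  assumes "compact A" "A \<noteq> {}"
  shows "sublinear (support_fun A)"
  unfolding sublinear_def pos_homogeneous_def
proof safe
  fix c :: real and u assume c: "0 \<le> c"
  obtain a where a: "a \<in> A" "support_fun A u = a \<bullet> u"
    using support_fun_attained assms by blast
  obtain a' where a': "a' \<in> A" "support_fun A (c *\<^sub>R u) = a' \<bullet> (c *\<^sub>R u)"
    using support_fun_attained assms by blast
  have "c * (a' \<bullet> u) \<le> c * (a \<bullet> u)"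
    using support_fun_upper[OF assms(1) a'(1), of u] a(2) c by (simp add: mult_left_mono)
  moreover have "c * (a \<bullet> u) \<le> c * (a' \<bullet> u)"
    using support_fun_upper[OF assms(1) a(1), of "c *\<^sub>R u"] a'(2) by simp
  ultimately show "support_fun A (c *\<^sub>R u) = c * support_fun A u" using a a' by simp
next
  fix u v
  obtain a where a: "a \<in> A" "support_fun A (u + v) = a \<bullet> (u + v)"
    using support_fun_attained assms by blast
  then show "support_fun A (u + v) \<le> support_fun A u + support_fun A v"
    using support_fun_upper[OF assms(1) a(1), of u] support_fun_upper[OF assms(1) a(1), of v]
    by (simp add: inner_add_right)
qed

lemma support_fun_scaled_set:
  "support_fun ((\<lambda>v. c *\<^sub>R v) ` A) u = support_fun A (c *\<^sub>R u)"
  unfolding support_fun_def image_image by simp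

lemma mem_if_below_support_fun:
  fixes M :: "'a::euclidean_space set"
  assumes "compact M" "convex M" "M \<noteq> {}" "\<And>u. p \<bullet> u \<le> support_fun M u"
  shows "p \<in> M"
proof (rule ccontr)
  assume "p \<notin> M"
  then obtain a c where ac: "a \<bullet> p < c" "\<forall>x\<in>M. a \<bullet> x > c"
    using separating_hyperplane_closed_point[OF assms(2) compact_imp_closed[OF assms(1)]] by blast
  obtain l where l: "l \<in> M" "support_fun M (- a) = l \<bullet> (- a)"
    using support_fun_attained[OF assms(1,3)] by blast
  have "a \<bullet> p < a \<bullet> l" using ac l by auto
  with assms(4)[of "- a"] l(2) show False by (simp add: inner_commute)
qed

section \<open>Orthogonal projections\<close>

text \<open>On a subspace, the description of \<open>orth_proj\<close> in \<open>Defs\<close> is well defined: the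
  orthogonal decomposition \<open>x = p + z\<close> provides the unique such point.\<close>
lemma orth_proj_characterization:
  fixes xi :: "'a::euclidean_space set"
  assumes "subspace xi"
  shows "orth_proj xi x \<in> xi \<and> (\<forall>y\<in>xi. (x - orth_proj xi x) \<bullet> y = 0)"
proof -
  obtain p z where pz: "p \<in> span xi" "\<And>w. w \<in> span xi \<Longrightarrow> orthogonal z w" "x = p + z"
    using orthogonal_subspace_decomp_exists by blast
  have span: "span xi = xi" using assms by simp
  have p: "p \<in> xi \<and> (\<forall>w\<in>xi. (x - p) \<bullet> w = 0)"
    using pz unfolding span by (auto simp: orthogonal_def)
  have unique: "q = p" if q: "q \<in> xi \<and> (\<forall>w\<in>xi. (x - q) \<bullet> w = 0)" for q
  proof -
    have "q - p \<in> xi" using p q assms by (simp add: subspace_diff)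
    then have "((x - p) - (x - q)) \<bullet> (q - p) = 0" using p q by (simp add: inner_diff_left)
    then show ?thesis by simp
  qed
  have "orth_proj xi x = p" unfolding orth_proj_def using p unique by (intro the_equality) blast+
  then show ?thesis using p by simp
qed

lemma orth_proj_inner:
  fixes xi :: "'a::euclidean_space set"
  assumes "subspace xi" "u \<in> xi"
  shows "orth_proj xi x \<bullet> u = x \<bullet> u"
proof -
  have "(x - orth_proj xi x) \<bullet> u = 0" using orth_proj_characterization[OF assms(1)] assms(2) by blast
  then show ?thesis by (simp add: inner_diff_left)
qed

lemma projection_translate_support:
  fixes K L :: "'a::euclidean_space set"
  assumes "subspace xi" "compact K" "K \<noteq> {}" "compact L"
    and w: "(\<lambda>v. v + w) ` proj_set xi K \<subseteq> proj_set xi L"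
    and u: "u \<in> xi"
  shows "support_fun K u + w \<bullet> u \<le> support_fun L u"
proof -
  obtain k where k: "k \<in> K" "support_fun K u = k \<bullet> u"
    using support_fun_attained[OF assms(2,3)] by blast
  have "orth_proj xi k + w \<in> proj_set xi L"
    using w k(1) unfolding proj_set_def by blast
  then obtain l where l: "l \<in> L" "orth_proj xi k + w = orth_proj xi l"
    unfolding proj_set_def by blast
  have "k \<bullet> u + w \<bullet> u = l \<bullet> u"
    using arg_cong[OF l(2), of "\<lambda>v. v \<bullet> u"] orth_proj_inner[OF assms(1) u]
    by (simp add: inner_add_left)
  then show ?thesis using k(2) support_fun_upper[OF assms(4) l(1)] by simp
qed

section \<open>Linear algebra of zero-sum families\<close>

text \<open>Every set of dimension at most \<open>k \<le> DIM('a)\<close> lies in a subspace of dimension exactly \<open>k\<close>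
  (the hypothesis of the theorem only concerns subspaces of one fixed dimension).\<close>
lemma subspace_extend:
  fixes S :: "'a::euclidean_space set"
  assumes "dim S \<le> k" "k \<le> DIM('a)"
  obtains T where "subspace T" "S \<subseteq> T" "dim T = k"
proof -
  have "\<exists>T. subspace T \<and> S \<subseteq> T \<and> dim T = dim S + j" if "dim S + j \<le> DIM('a)" for j
    using that
  proof (induction j)
    case 0
    then show ?case by (intro exI[of _ "span S"]) (auto simp: span_superset)
  next
    case (Suc j)
    then obtain T where T: "subspace T" "S \<subseteq> T" "dim T = dim S + j" by auto
    have "dim T < DIM('a)" using T Suc.prems by simp
    then obtain y where "y \<notin> T" by (metis UNIV_I dim_UNIV less_irrefl subsetI subset_antisym)
    then have "y \<notin> span T" using T(1) by (metis span_eq_iff)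
    then have "dim (span (insert y T)) = dim S + Suc j" using T(3) by (simp add: dim_insert)
    moreover have "S \<subseteq> span (insert y T)" using T(2) span_base by blast
    ultimately show ?case using subspace_span by blast
  qed
  then show ?thesis using that assms by (metis le_add_diff_inverse)
qed

lemma zero_sum_family_dim:
  fixes a :: "'i \<Rightarrow> 'a::euclidean_space"
  assumes "finite S" "card S \<le> k + 1" "(\<Sum>i\<in>S. a i) = 0"
  shows "dim (a ` S) \<le> k"
proof (cases "S = {}")
  case True
  then show ?thesis by simp
next
  case False
  then obtain j where j: "j \<in> S" by blast
  have "a j = - (\<Sum>i\<in>S-{j}. a i)"
    using assms(3) sum.remove[OF assms(1) j, of a] by (simp add: eq_neg_iff_add_eq_0)
  moreover have "(\<Sum>i\<in>S-{j}. a i) \<in> span (a ` (S - {j}))"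
    by (intro span_sum) (auto intro: span_base)
  ultimately have "a i \<in> span (a ` (S - {j}))" if "i \<in> S" for i
    using that by (cases "i = j") (auto intro: span_base simp: span_neg)
  then have "a ` S \<subseteq> span (a ` (S - {j}))" by blast
  then have "dim (a ` S) \<le> card (a ` (S - {j}))" using assms(1) by (simp add: dim_le_card)
  also have "\<dots> \<le> card (S - {j})" using assms(1) by (simp add: card_image_le)
  also have "\<dots> \<le> k" using assms(1,2) j by simp
  finally show ?thesis .
qed

lemma family_linear_relation:
  fixes a :: "'i \<Rightarrow> 'a::euclidean_space"
  assumes fin: "finite S" and big: "card S > DIM('a)"
  obtains c where "(\<Sum>i\<in>S. c i *\<^sub>R a i) = 0" "\<exists>i\<in>S. c i \<noteq> 0"
proof (cases "inj_on a S")
  case True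
  then have "card (a ` S) > DIM('a)" using big by (simp add: card_image)
  then have "dependent (a ` S)" using dependent_biggerset by blast
  then obtain u where u: "\<exists>v\<in>a ` S. u v \<noteq> 0" "(\<Sum>v\<in>a ` S. u v *\<^sub>R v) = 0"
    using fin by (auto simp: dependent_finite)
  have "(\<Sum>i\<in>S. u (a i) *\<^sub>R a i) = (\<Sum>v\<in>a ` S. u v *\<^sub>R v)"
    using True by (simp add: sum.reindex)
  then show ?thesis using u that[of "\<lambda>i. u (a i)"] by auto
next
  case False
  then obtain i k where ik: "i \<in> S" "k \<in> S" "i \<noteq> k" "a i = a k"
    unfolding inj_on_def by blast
  define c where "c x = (if x = i then 1 else if x = k then -1 else (0::real))" for x
  have "(\<Sum>x\<in>S. c x *\<^sub>R a x) = (\<Sum>x\<in>S. (if x = i then a i else 0) - (if x = k then a k else 0))"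
    by (intro sum.cong refl) (use ik in \<open>auto simp: c_def\<close>)
  also have "\<dots> = 0" using fin ik by (simp add: sum_subtractf)
  finally have "(\<Sum>x\<in>S. c x *\<^sub>R a x) = 0" .
  moreover have "\<exists>x\<in>S. c x \<noteq> 0" using ik(1) by (intro bexI[of _ i]) (simp_all add: c_def)
  ultimately show ?thesis using that by blast
qed

lemma zero_sum_family_split:
  fixes a :: "'i \<Rightarrow> 'a::euclidean_space"
  assumes fin: "finite S" and big: "card S > DIM('a) + 1" and s0: "(\<Sum>i\<in>S. a i) = 0"
  obtains \<alpha> where "\<And>i. i \<in> S \<Longrightarrow> 0 \<le> \<alpha> i \<and> \<alpha> i \<le> 1" "(\<Sum>i\<in>S. \<alpha> i *\<^sub>R a i) = 0"
    "\<exists>i\<in>S. \<alpha> i = 0" "\<exists>i\<in>S. \<alpha> i = 1"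
proof -
  obtain j where j: "j \<in> S" using big by fastforce
  have "card (S - {j}) > DIM('a)" using big j fin by simp
  then obtain c where c: "(\<Sum>i\<in>S-{j}. c i *\<^sub>R a i) = 0" "\<exists>i\<in>S-{j}. c i \<noteq> 0"
    using family_linear_relation[of "S - {j}" a] fin by blast
  text \<open>Extending the relation by \<open>0\<close> at \<open>j\<close> makes it nonconstant on \<open>S\<close>.\<close>
  define c' where "c' x = (if x = j then 0 else c x)" for x
  have c'0: "(\<Sum>i\<in>S. c' i *\<^sub>R a i) = 0"
    using c(1) sum.remove[OF fin j, of "\<lambda>i. c' i *\<^sub>R a i"] by (simp add: c'_def)
  define lo where "lo = Min (c' ` S)"
  define hi where "hi = Max (c' ` S)"
  obtain xl where xl: "xl \<in> S" "c' xl = lo"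
    unfolding lo_def using fin j Min_in[of "c' ` S"] by fastforce
  obtain xh where xh: "xh \<in> S" "c' xh = hi"
    unfolding hi_def using fin j Max_in[of "c' ` S"] by fastforce
  have bounds: "lo \<le> c' x \<and> c' x \<le> hi" if "x \<in> S" for x
    using fin that unfolding lo_def hi_def by simp
  obtain i0 where i0: "i0 \<in> S" "i0 \<noteq> j" "c i0 \<noteq> 0" using c(2) by blast
  then have "c' i0 \<noteq> c' j" by (simp add: c'_def)
  then have lohi: "lo < hi" using bounds[OF i0(1)] bounds[OF j] by linarith
  define \<alpha> where "\<alpha> x = (c' x - lo) / (hi - lo)" for x
  have "(\<Sum>i\<in>S. \<alpha> i *\<^sub>R a i) = (1 / (hi - lo)) *\<^sub>R ((\<Sum>i\<in>S. c' i *\<^sub>R a i) - lo *\<^sub>R (\<Sum>i\<in>S. a i))"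
    by (simp add: \<alpha>_def scaleR_sum_right sum_subtractf[symmetric] scaleR_diff_right
        divide_inverse algebra_simps)
  then have "(\<Sum>i\<in>S. \<alpha> i *\<^sub>R a i) = 0" using c'0 s0 by simp
  moreover have "0 \<le> \<alpha> i \<and> \<alpha> i \<le> 1" if "i \<in> S" for i
    using bounds[OF that] lohi by (auto simp: \<alpha>_def field_simps)
  moreover have "\<alpha> xl = 0" "\<alpha> xh = 1" using xl xh lohi by (auto simp: \<alpha>_def)
  ultimately show ?thesis using that xl xh by blast
qed

section \<open>Inequalities for zero-sum families\<close>

text \<open>Step (1): the projection hypothesis controls zero-sum families of at most \<open>m + 1\<close> vectors,
  since they live in an \<open>m\<close>-dimensional subspace, where the linear term \<open>w \<bullet> a\<^sub>i\<close> sums to zero.\<close>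
lemma small_family_ineq:
  fixes hK hL :: "'a::euclidean_space \<Rightarrow> real"
  assumes "m \<le> DIM('a)"
    and proj: "\<And>xi. subspace xi \<Longrightarrow> dim xi = m \<Longrightarrow> \<exists>w. \<forall>u\<in>xi. hK u + w \<bullet> u \<le> hL u"
    and S: "finite S" "card S \<le> m + 1" "(\<Sum>i\<in>S. a i) = 0"
  shows "(\<Sum>i\<in>S. hK (a i)) \<le> (\<Sum>i\<in>S. hL (a i))"
proof -
  obtain T where T: "subspace T" "a ` S \<subseteq> T" "dim T = m"
    using subspace_extend[OF zero_sum_family_dim[OF S] assms(1)] by blast
  obtain w where w: "\<forall>u\<in>T. hK u + w \<bullet> u \<le> hL u" using proj[OF T(1,3)] by blast
  have "(\<Sum>i\<in>S. hK (a i) + w \<bullet> a i) \<le> (\<Sum>i\<in>S. hL (a i))"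
    using T(2) w by (intro sum_mono) blast
  moreover have "(\<Sum>i\<in>S. w \<bullet> a i) = 0" using S(3) by (simp add: inner_sum_right[symmetric])
  ultimately show ?thesis by (simp add: sum.distrib)
qed

text \<open>For a zero-sum family of \<open>N + 1\<close> vectors and a fixed index \<open>j\<close>, the \<open>N\<close> vectors
  \<open>a\<^sub>i + a\<^sub>j / N\<close> (\<open>i \<noteq> j\<close>) again have sum zero.\<close>
lemma sublinear_perturb_upper:
  assumes h: "sublinear h" and S: "finite S" "j \<in> S" "card S = Suc N" and N: "N \<ge> 1"
  shows "(\<Sum>i\<in>S-{j}. h (a i + (1 / real N) *\<^sub>R a j)) \<le> (\<Sum>i\<in>S. h (a i))"
proof -
  have "(\<Sum>i\<in>S-{j}. h (a i + (1 / real N) *\<^sub>R a j)) \<le> (\<Sum>i\<in>S-{j}. h (a i) + (1 / real N) * h (a j))"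
    using h unfolding sublinear_def pos_homogeneous_def by (intro sum_mono) (metis of_nat_0_le_iff
        divide_nonneg_nonneg zero_le_one)
  also have "\<dots> = (\<Sum>i\<in>S-{j}. h (a i)) + h (a j)" using S N by (simp add: sum.distrib)
  also have "\<dots> = (\<Sum>i\<in>S. h (a i))" using S by (simp add: sum.remove)
  finally show ?thesis .
qed

lemma sublinear_perturb_lower:
  assumes h: "sublinear h" and S: "finite S" "i \<in> S" "card S = Suc N" "(\<Sum>j\<in>S. a j) = 0"
    and N: "N \<ge> 1"
  shows "(real N - 1 / real N) * h (a i) \<le> (\<Sum>j\<in>S-{i}. h (a i + (1 / real N) *\<^sub>R a j))"
proof -
  have card: "card (S - {i}) = N" using S by simp
  have "(\<Sum>j\<in>S-{i}. a j) = - a i"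
    using S sum.remove[OF S(1,2), of a] by (simp add: eq_neg_iff_add_eq_0 add.commute)
  then have total: "(\<Sum>j\<in>S-{i}. a i + (1 / real N) *\<^sub>R a j) = (real N - 1 / real N) *\<^sub>R a i"
    using card by (simp add: sum.distrib sum_constant_scaleR scaleR_sum_right[symmetric]
        algebra_simps)
  have "1 / real N \<le> 1" "1 \<le> real N" using N by simp_all
  then have "real N - 1 / real N \<ge> 0" by linarith
  then have "h ((real N - 1 / real N) *\<^sub>R a i) = (real N - 1 / real N) * h (a i)"
    using h unfolding sublinear_def pos_homogeneous_def by blast
  moreover have "h (\<Sum>j\<in>S-{i}. a i + (1 / real N) *\<^sub>R a j)
      \<le> (\<Sum>j\<in>S-{i}. h (a i + (1 / real N) *\<^sub>R a j))"
    using S(1) by (intro sublinear_sum[OF h]) simp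
  ultimately show ?thesis unfolding total by simp
qed

lemma sum_offdiag_swap:
  assumes "finite S"
  shows "(\<Sum>j\<in>S. \<Sum>i\<in>S-{j}. F j i) = (\<Sum>i\<in>S. \<Sum>j\<in>S-{i}. F j i)"
proof -
  have "(\<Sum>j\<in>S. \<Sum>i\<in>{i. i \<in> S \<and> j \<noteq> i}. F j i) = (\<Sum>i\<in>S. \<Sum>j\<in>{j. j \<in> S \<and> j \<noteq> i}. F j i)"
    by (rule sum.swap_restrict[OF assms assms])
  moreover have "{i. i \<in> S \<and> j \<noteq> i} = S - {j}" "{i. i \<in> S \<and> i \<noteq> j} = S - {j}" for j
    by auto
  ultimately show ?thesis by simp
qed

text \<open>The arithmetic that closes the inductive step: since \<open>N - 1/N = (N + 1)(N - 1)/N\<close>,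
  the common positive factor \<open>(N + 1)(N - 1)\<close> cancels.\<close>
lemma symmetrisation_cancel:
  fixes A B c :: real
  assumes N: "N \<ge> 2" and ineq: "c * ((real N - 1 / real N) * A) \<le> (real N + 1) * (real N - 1) * B"
  shows "c * A \<le> real N * B"
proof -
  have "c * ((real N - 1 / real N) * A) = (real N + 1) * (real N - 1) * (c * A / real N)"
    using N by (simp add: field_simps)
  with ineq have "(real N + 1) * (real N - 1) * (c * A / real N) \<le> (real N + 1) * (real N - 1) * B"
    by simp
  moreover have "0 < (real N + 1) * (real N - 1)" using N by (intro mult_pos_pos) auto
  ultimately have "c * A / real N \<le> B" using mult_le_cancel_left_pos by blast
  then show ?thesis using N by (simp add: pos_divide_le_eq mult.commute)
qed

lemma family_ineq_step:
  fixes hK hL :: "'a::real_vector \<Rightarrow> real" and S :: "'i set"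
  assumes hK: "sublinear hK" and hL: "sublinear hL" and N: "N \<ge> 2" and c: "c \<ge> 0"
    and IH: "\<And>T (b::'i \<Rightarrow> 'a). finite T \<Longrightarrow> card T = N \<Longrightarrow> (\<Sum>i\<in>T. b i) = 0 \<Longrightarrow>
               c * (\<Sum>i\<in>T. hK (b i)) \<le> (real N - 1) * (\<Sum>i\<in>T. hL (b i))"
    and S: "finite S" "card S = Suc N" "(\<Sum>i\<in>S. a i) = 0"
  shows "c * (\<Sum>i\<in>S. hK (a i)) \<le> real N * (\<Sum>i\<in>S. hL (a i))"
proof -
  define b where "b j i = a i + (1 / real N) *\<^sub>R a j" for j i
  define A where "A = (\<Sum>i\<in>S. hK (a i))"
  define B where "B = (\<Sum>i\<in>S. hL (a i))"
  have N1: "N \<ge> 1" using N by simp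
  have per_j: "c * (\<Sum>i\<in>S-{j}. hK (b j i)) \<le> (real N - 1) * B" if j: "j \<in> S" for j
  proof -
    have card: "card (S - {j}) = N" using S j by simp
    have "(\<Sum>i\<in>S-{j}. b j i) = (\<Sum>i\<in>S-{j}. a i) + a j"
      using card N by (simp add: b_def sum.distrib sum_constant_scaleR)
    also have "\<dots> = 0" using S(3) sum.remove[OF S(1) j, of a] by (simp add: add.commute)
    finally have "c * (\<Sum>i\<in>S-{j}. hK (b j i)) \<le> (real N - 1) * (\<Sum>i\<in>S-{j}. hL (b j i))"
      using IH[of "S - {j}" "b j"] S(1) card by simp
    also have "\<dots> \<le> (real N - 1) * B"
      unfolding B_def b_def using N sublinear_perturb_upper[OF hL S(1) j S(2) N1]
      by (intro mult_left_mono) auto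
    finally show ?thesis .
  qed
  have "(real N - 1 / real N) * A \<le> (\<Sum>i\<in>S. \<Sum>j\<in>S-{i}. hK (b j i))"
    unfolding A_def b_def sum_distrib_left
    by (intro sum_mono sublinear_perturb_lower[OF hK S(1) _ S(2,3) N1])
  then have "c * ((real N - 1 / real N) * A) \<le> c * (\<Sum>i\<in>S. \<Sum>j\<in>S-{i}. hK (b j i))"
    using c by (rule mult_left_mono)
  also have "\<dots> = c * (\<Sum>j\<in>S. \<Sum>i\<in>S-{j}. hK (b j i))"
    using sum_offdiag_swap[OF S(1), of "\<lambda>j i. hK (b j i)"] by simp
  also have "\<dots> = (\<Sum>j\<in>S. c * (\<Sum>i\<in>S-{j}. hK (b j i)))"
    by (rule sum_distrib_left)
  also have "\<dots> \<le> (\<Sum>j\<in>S. (real N - 1) * B)"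
    by (intro sum_mono per_j)
  also have "\<dots> = (real N + 1) * (real N - 1) * B" using S(2) by simp
  finally have "c * ((real N - 1 / real N) * A) \<le> (real N + 1) * (real N - 1) * B" .
  then show ?thesis unfolding A_def B_def by (rule symmetrisation_cancel[OF N])
qed

lemma family_ineq_grow:
  fixes hK hL :: "'a::real_vector \<Rightarrow> real" and S :: "'i set"
  assumes hK: "sublinear hK" and hL: "sublinear hL"
    and base: "\<And>T (b::'i \<Rightarrow> 'a). finite T \<Longrightarrow> card T = m + 1 \<Longrightarrow> (\<Sum>i\<in>T. b i) = 0 \<Longrightarrow>
              (\<Sum>i\<in>T. hK (b i)) \<le> (\<Sum>i\<in>T. hL (b i))"
    and m: "m \<ge> 1"
  shows "N \<ge> m + 1 \<Longrightarrow> finite S \<Longrightarrow> card S = N \<Longrightarrow> (\<Sum>i\<in>S. a i) = 0 \<Longrightarrow>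
     real m * (\<Sum>i\<in>S. hK (a i)) \<le> (real N - 1) * (\<Sum>i\<in>S. hL (a i))"
proof (induction N arbitrary: S a rule: nat_induct_at_least)
  case base
  then show ?case using assms(3)[of S a] by (simp add: mult_left_mono)
next
  case (Suc N)
  have "real m * (\<Sum>i\<in>S. hK (a i)) \<le> real N * (\<Sum>i\<in>S. hL (a i))"
    by (rule family_ineq_step[OF hK hL _ _ Suc.IH]) (use Suc m in auto)
  then show ?case by simp
qed

lemma family_ineq_dilated:
  fixes hK hL :: "'a::real_vector \<Rightarrow> real" and S :: "'i set"
  assumes hK: "sublinear hK" and hL: "sublinear hL" and m: "1 \<le> m" "m \<le> n"
    and small: "\<And>T (b::'i \<Rightarrow> 'a). finite T \<Longrightarrow> card T \<le> m + 1 \<Longrightarrow> (\<Sum>i\<in>T. b i) = 0 \<Longrightarrow>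
              (\<Sum>i\<in>T. hK (b i)) \<le> (\<Sum>i\<in>T. hL (b i))"
    and S: "finite S" "card S \<le> n + 1" "(\<Sum>i\<in>S. a i) = 0"
  shows "(\<Sum>i\<in>S. hK (a i)) \<le> (real n / real m) * (\<Sum>i\<in>S. hL (a i))"
proof -
  define A where "A = (\<Sum>i\<in>S. hK (a i))"
  define B where "B = (\<Sum>i\<in>S. hL (a i))"
  have B0: "0 \<le> B" unfolding B_def using sublinear_zero_sum_nonneg[OF hL S(1,3)] .
  have "real m * A \<le> real n * B"
  proof (cases "card S \<le> m + 1")
    case True
    then have "real m * A \<le> real m * B"
      using small[OF S(1) True S(3)] unfolding A_def B_def by (intro mult_left_mono) auto
    also have "\<dots> \<le> real n * B" using m(2) B0 by (intro mult_right_mono) auto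
    finally show ?thesis .
  next
    case False
    have "real m * A \<le> (real (card S) - 1) * B"
      unfolding A_def B_def
      by (rule family_ineq_grow[OF hK hL _ m(1)]) (use small False S in auto)
    also have "\<dots> \<le> real n * B" using S(2) B0 by (intro mult_right_mono) auto
    finally show ?thesis .
  qed
  then show ?thesis using m unfolding A_def B_def by (simp add: field_simps)
qed

lemma pos_homogeneous_split:
  assumes "pos_homogeneous g" "0 \<le> t" "t \<le> 1"
  shows "g v = g (t *\<^sub>R v) + g ((1 - t) *\<^sub>R v)"
proof -
  have "g (t *\<^sub>R v) = t * g v" "g ((1 - t) *\<^sub>R v) = (1 - t) * g v"
    using assms unfolding pos_homogeneous_def by simp_all
  then show ?thesis by (simp add: algebra_simps)
qed

lemma zero_sum_nonpos_from_small:
  fixes g :: "'a::euclidean_space \<Rightarrow> real" and S :: "'i set"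
  assumes hom: "pos_homogeneous g"
    and small: "\<And>T (b::'i \<Rightarrow> 'a). finite T \<Longrightarrow> card T \<le> DIM('a) + 1 \<Longrightarrow>
          (\<Sum>i\<in>T. b i) = 0 \<Longrightarrow> (\<Sum>i\<in>T. g (b i)) \<le> 0"
  shows "finite S \<Longrightarrow> (\<Sum>i\<in>S. a i) = 0 \<Longrightarrow> (\<Sum>i\<in>S. g (a i)) \<le> 0"
proof (induction "card S" arbitrary: S a rule: less_induct)
  case less
  note fin = \<open>finite S\<close> and s0 = \<open>(\<Sum>i\<in>S. a i) = 0\<close>
  show ?case
  proof (cases "card S \<le> DIM('a) + 1")
    case True
    then show ?thesis using small fin s0 by blast
  next
    case False
    then have big: "card S > DIM('a) + 1" by simp
    obtain \<alpha> where \<alpha>: "\<And>i. i \<in> S \<Longrightarrow> 0 \<le> \<alpha> i \<and> \<alpha> i \<le> 1"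
      "(\<Sum>i\<in>S. \<alpha> i *\<^sub>R a i) = 0" "\<exists>i\<in>S. \<alpha> i = 0" "\<exists>i\<in>S. \<alpha> i = 1"
      using zero_sum_family_split[OF fin big s0] by blast
    have g0: "g 0 = 0" using hom by (rule pos_homogeneous_zero)
    text \<open>Each of the two parts is supported on a proper subset of \<open>S\<close>.\<close>
    have part: "(\<Sum>i\<in>S. g (\<beta> i *\<^sub>R a i)) \<le> 0"
      if "(\<Sum>i\<in>S. \<beta> i *\<^sub>R a i) = 0" "\<exists>i\<in>S. \<beta> i = 0" for \<beta>
    proof -
      define S' where "S' = {i\<in>S. \<beta> i \<noteq> 0}"
      have S': "S' \<subseteq> S" "finite S'" using fin unfolding S'_def by auto
      have restrict: "sum f S' = sum f S" if "\<And>i. \<beta> i = 0 \<Longrightarrow> f i = 0" for f :: "'i \<Rightarrow> 'b::comm_monoid_add"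
        using sum.mono_neutral_left[OF fin S'(1), of f] that unfolding S'_def by blast
      have "card S' < card S" using fin that(2) unfolding S'_def by (intro psubset_card_mono) auto
      moreover have "(\<Sum>i\<in>S'. \<beta> i *\<^sub>R a i) = 0" using that(1) restrict[of "\<lambda>i. \<beta> i *\<^sub>R a i"] by simp
      ultimately have "(\<Sum>i\<in>S'. g (\<beta> i *\<^sub>R a i)) \<le> 0" by (rule less(1)[OF _ S'(2)])
      then show ?thesis using restrict[of "\<lambda>i. g (\<beta> i *\<^sub>R a i)"] g0 by simp
    qed
    have "(\<Sum>i\<in>S. (1 - \<alpha> i) *\<^sub>R a i) = 0"
      using \<alpha>(2) s0 by (simp add: scaleR_diff_left sum_subtractf)
    moreover have "\<exists>i\<in>S. 1 - \<alpha> i = 0" using \<alpha>(4) by simp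
    ultimately have parts: "(\<Sum>i\<in>S. g (\<alpha> i *\<^sub>R a i)) + (\<Sum>i\<in>S. g ((1 - \<alpha> i) *\<^sub>R a i)) \<le> 0"
      using part[of \<alpha>] part[of "\<lambda>i. 1 - \<alpha> i"] \<alpha>(2,3) by (simp add: add_nonpos_nonpos)
    have "(\<Sum>i\<in>S. g (a i)) = (\<Sum>i\<in>S. g (\<alpha> i *\<^sub>R a i) + g ((1 - \<alpha> i) *\<^sub>R a i))"
      using \<alpha>(1) by (intro sum.cong refl pos_homogeneous_split[OF hom]) auto
    with parts show ?thesis by (simp add: sum.distrib)
  qed
qed

lemma pos_homogeneous_bounded_above:
  assumes "pos_homogeneous f" "\<And>u. f u \<le> b"
  shows "f u \<le> 0"
proof (rule ccontr)
  assume pos: "\<not> f u \<le> 0"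
  have "0 \<le> b" using assms pos_homogeneous_zero by metis
  then have "f (((b + 1) / f u) *\<^sub>R u) = b + 1"
    using assms(1) pos unfolding pos_homogeneous_def by simp
  then show False using assms(2) by (metis add_le_same_cancel1 not_one_le_zero)
qed

text \<open>If \<open>\<Sum> g(a\<^sub>i) \<le> 0\<close> on all zero-sum families and \<open>g\<close> is positively homogeneous, then a
  point \<open>(0, t)\<close> of the convex hull of the graph of \<open>g\<close> has \<open>t \<le> 0\<close>: the convex combination
  \<open>\<Sum> \<mu>\<^sub>i (u\<^sub>i, g u\<^sub>i)\<close> gives the zero-sum family \<open>\<mu>\<^sub>i u\<^sub>i\<close> with \<open>\<Sum> g(\<mu>\<^sub>i u\<^sub>i) = t\<close>.\<close>
lemma graph_hull_axis:
  fixes g :: "'a::euclidean_space \<Rightarrow> real"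
  assumes hom: "pos_homogeneous g"
    and zero_sum: "\<And>S (a::'a \<Rightarrow> 'a). finite S \<Longrightarrow> (\<Sum>i\<in>S. a i) = 0 \<Longrightarrow> (\<Sum>i\<in>S. g (a i)) \<le> 0"
    and t: "(0, t) \<in> convex hull (range (\<lambda>u. (u, g u)))"
  shows "t \<le> 0"
proof -
  obtain F \<mu> where F: "finite F" "F \<subseteq> range (\<lambda>u. (u, g u))" "\<forall>x\<in>F. 0 \<le> \<mu> x"
    "(\<Sum>v\<in>F. \<mu> v *\<^sub>R v) = (0, t)"
    using t unfolding convex_hull_explicit by blast
  text \<open>Index the combination by the first coordinates, which are distinct on the graph.\<close>
  have graph: "v = (fst v, g (fst v))" if "v \<in> F" for v using F(2) that by auto
  have inj: "inj_on fst F" by (metis graph inj_onI)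
  define a where "a u = \<mu> (u, g u) *\<^sub>R u" for u
  have sums: "(\<Sum>u\<in>fst ` F. f u) = (\<Sum>v\<in>F. f (fst v))" for f :: "'a \<Rightarrow> 'b::comm_monoid_add"
    using inj by (simp add: sum.reindex)
  have "(\<Sum>u\<in>fst ` F. a u) = (\<Sum>v\<in>F. \<mu> v *\<^sub>R fst v)"
    unfolding sums a_def using graph by (intro sum.cong refl) (metis prod.collapse)
  also have "\<dots> = 0" using arg_cong[OF F(4), of fst] by (simp add: fst_sum)
  finally have "(\<Sum>u\<in>fst ` F. g (a u)) \<le> 0" using zero_sum F(1) by blast
  moreover have "(\<Sum>u\<in>fst ` F. g (a u)) = (\<Sum>v\<in>F. \<mu> v * snd v)"
    unfolding sums a_def using graph hom F(3) unfolding pos_homogeneous_def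
    by (intro sum.cong refl) (metis snd_conv)
  moreover have "(\<Sum>v\<in>F. \<mu> v * snd v) = t" using arg_cong[OF F(4), of snd] by (simp add: snd_sum)
  ultimately show ?thesis by simp
qed

text \<open>By the previous lemma a hyperplane separates the convex
  hull of its graph from the positive vertical axis; it cannot be vertical, and positive
  homogeneity forces it through the origin.\<close>
lemma dominated_by_linear:
  fixes g :: "'a::euclidean_space \<Rightarrow> real"
  assumes hom: "pos_homogeneous g"
    and zero_sum: "\<And>S (a::'a \<Rightarrow> 'a). finite S \<Longrightarrow> (\<Sum>i\<in>S. a i) = 0 \<Longrightarrow> (\<Sum>i\<in>S. g (a i)) \<le> 0"
  obtains z where "\<And>u. g u \<le> z \<bullet> u"
proof -
  define Q where "Q = convex hull (range (\<lambda>u. (u, g u)))"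
  define R where "R = {0::'a} \<times> {0::real<..}"
  have "t \<le> 0" if "(0, t) \<in> Q" for t
    using graph_hull_axis[OF hom zero_sum] that unfolding Q_def by blast
  then have "Q \<inter> R = {}" unfolding R_def by fastforce
  moreover have "convex Q" "convex R" "Q \<noteq> {}" "R \<noteq> {}"
    unfolding Q_def R_def by (auto intro: convex_Times)
  ultimately obtain A b where A: "A \<noteq> 0" "\<forall>x\<in>Q. A \<bullet> x \<le> b" "\<forall>x\<in>R. A \<bullet> x \<ge> b"
    using separating_hyperplane_sets[of Q R] by blast
  obtain y \<beta> where y\<beta>: "A = (y, \<beta>)" by (cases A)
  have below: "y \<bullet> u + \<beta> * g u \<le> b" for u
    using A(2) y\<beta> hull_inc[of "(u, g u)" "range (\<lambda>u. (u, g u))" convex] unfolding Q_def by auto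
  have axis: "\<beta> * t \<ge> b" if "t > 0" for t
    using A(3) that y\<beta> unfolding R_def by auto
  have nonpos: "y \<bullet> u + \<beta> * g u \<le> 0" for u
    by (rule pos_homogeneous_bounded_above[OF _ below])
      (use hom in \<open>simp add: pos_homogeneous_def algebra_simps\<close>)
  have "\<beta> \<ge> 0" using axis[of 1] below[of 0] pos_homogeneous_zero[OF hom] by simp
  moreover have "\<beta> \<noteq> 0"
  proof
    assume "\<beta> = 0"
    then have "y \<bullet> y \<le> 0" using nonpos[of y] by simp
    then have "y = 0" by (metis antisym inner_ge_zero inner_eq_zero_iff)
    then show False using A(1) y\<beta> \<open>\<beta> = 0\<close> by (simp add: zero_prod_def)
  qed
  ultimately have "g u \<le> ((- 1 / \<beta>) *\<^sub>R y) \<bullet> u" for u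
    using nonpos[of u] by (simp add: field_simps)
  then show ?thesis using that by blast
qed

lemma dilated_difference_dominated:
  fixes hK hL :: "'a::euclidean_space \<Rightarrow> real"
  assumes hK: "sublinear hK" and hL: "sublinear hL" and m: "1 \<le> m" "m \<le> DIM('a)"
    and small: "\<And>T (b::'a \<Rightarrow> 'a). finite T \<Longrightarrow> card T \<le> m + 1 \<Longrightarrow> (\<Sum>i\<in>T. b i) = 0 \<Longrightarrow>
              (\<Sum>i\<in>T. hK (b i)) \<le> (\<Sum>i\<in>T. hL (b i))"
  obtains z where "\<And>u. hK u - (real DIM('a) / real m) * hL u \<le> z \<bullet> u"
proof -
  define lam where "lam = real DIM('a) / real m"
  define g where "g u = hK u - lam * hL u" for u
  have hom: "pos_homogeneous g"
    using hK hL unfolding g_def sublinear_def pos_homogeneous_def by (simp add: algebra_simps)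
  have small_g: "(\<Sum>i\<in>T. g (b i)) \<le> 0"
    if T: "finite T" "card T \<le> DIM('a) + 1" "(\<Sum>i\<in>T. b i) = 0" for T and b :: "'a \<Rightarrow> 'a"
  proof -
    have "(\<Sum>i\<in>T. hK (b i)) \<le> lam * (\<Sum>i\<in>T. hL (b i))"
      unfolding lam_def by (rule family_ineq_dilated[OF hK hL m small T])
    then show ?thesis by (simp add: g_def sum_subtractf sum_distrib_left)
  qed
  obtain z where "\<And>u. g u \<le> z \<bullet> u"
    using dominated_by_linear[OF hom zero_sum_nonpos_from_small[OF hom small_g]] by blast
  then show ?thesis using that unfolding g_def lam_def by blast
qed

text \<open>Step (4): a translate of \<open>K\<close> lies in \<open>\<lambda> L\<close> as soon as the support functions compare
  accordingly, since \<open>\<lambda> h\<^sub>L\<close> is the support function of \<open>\<lambda> L\<close>.\<close>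
lemma translate_subset_dilate:
  fixes K L :: "'a::euclidean_space set"
  assumes K: "compact K" and L: "compact L" "convex L" "L \<noteq> {}" and lam: "0 \<le> lam"
    and le: "\<And>u. support_fun K u - z \<bullet> u \<le> lam * support_fun L u"
  shows "(\<lambda>v. v + (- z)) ` K \<subseteq> (\<lambda>v. lam *\<^sub>R v) ` L"
proof (clarsimp)
  fix k assume k: "k \<in> K"
  show "k - z \<in> (\<lambda>v. lam *\<^sub>R v) ` L"
  proof (rule mem_if_below_support_fun)
    fix u
    have "(k - z) \<bullet> u \<le> support_fun K u - z \<bullet> u"
      using support_fun_upper[OF K k] by (simp add: inner_diff_left)
    also have "\<dots> \<le> lam * support_fun L u" by (rule le)
    also have "\<dots> = support_fun ((\<lambda>v. lam *\<^sub>R v) ` L) u"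
      using sublinear_support_fun[OF L(1,3)] lam
      unfolding support_fun_scaled_set sublinear_def pos_homogeneous_def by simp
    finally show "(k - z) \<bullet> u \<le> support_fun ((\<lambda>v. lam *\<^sub>R v) ` L) u" .
  qed (use L in \<open>auto intro: compact_scaling convex_scaling\<close>)
qed

theorem theorem6p1:
  fixes K L :: "'a::euclidean_space set" and d :: nat
  assumes "DIM('a) \<ge> 2"
    and "compact K" "convex K" "compact L" "convex L"
    and "1 \<le> d" "d \<le> DIM('a) - 1"
    and "\<And>xi. subspace xi \<Longrightarrow> dim xi = DIM('a) - d \<Longrightarrow>
           \<exists>w. (\<lambda>v. v + w) ` proj_set xi K \<subseteq> proj_set xi L"
  shows "\<exists>x. (\<lambda>v. v + x) ` K \<subseteq> (\<lambda>v. (real DIM('a) / real (DIM('a) - d)) *\<^sub>R v) ` L"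
proof (cases "K = {}")
  case True
  then show ?thesis by simp
next
  case Kne: False
  define m where "m = DIM('a) - d"
  define lam where "lam = real DIM('a) / real m"
  have m: "1 \<le> m" "m \<le> DIM('a)" using assms(6,7) unfolding m_def by auto
  have translate: "\<exists>w. (\<lambda>v. v + w) ` proj_set xi K \<subseteq> proj_set xi L"
    if "subspace xi" "dim xi = m" for xi
    using assms(8) that unfolding m_def by blast
  have Lne: "L \<noteq> {}"
  proof -
    obtain xi :: "'a set" where xi: "subspace xi" "dim xi = m"
      using subspace_extend[of "{}" m] m by auto
    obtain w where "(\<lambda>v. v + w) ` proj_set xi K \<subseteq> proj_set xi L" using translate[OF xi] by blast
    then show ?thesis using Kne unfolding proj_set_def by auto
  qed
  have subl: "sublinear (support_fun K)" "sublinear (support_fun L)"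
    using sublinear_support_fun assms(2,4) Kne Lne by auto
  have proj: "\<exists>w. \<forall>u\<in>xi. support_fun K u + w \<bullet> u \<le> support_fun L u"
    if xi: "subspace xi" "dim xi = m" for xi
    using translate[OF xi] projection_translate_support[OF xi(1) assms(2) Kne assms(4)] by blast
  obtain z where z: "\<And>u. support_fun K u - lam * support_fun L u \<le> z \<bullet> u"
    using dilated_difference_dominated[OF subl m small_family_ineq[OF m(2) proj]]
    unfolding lam_def by blast
  have "support_fun K u - z \<bullet> u \<le> lam * support_fun L u" for u using z[of u] by linarith
  then have "(\<lambda>v. v + (- z)) ` K \<subseteq> (\<lambda>v. lam *\<^sub>R v) ` L"
    by (intro translate_subset_dilate assms(2,4,5) Lne) (simp_all add: lam_def)
  then show ?thesis unfolding lam_def m_def by blast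
qed

end
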